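(* Let $\alpha\in(1,2)$. Let $\Theta=\begin{pmatrix} a_1 & a_2\\ a_3 & a_4\end{pmatrix}$ be a real $2\times2$ matrix, write $\Theta^j=\begin{pmatrix} a_1^{(j)} & a_2^{(j)}\\ a_3^{(j)} & a_4^{(j)}\end{pmatrix}$ ($\Theta^0=I$), and assume $\sum_{j=0}^\infty(|a_1^{(j)}|+|a_2^{(j)}|)<\infty$ and $\sum_{j=0}^\infty(|a_3^{(j)}|+|a_4^{(j)}|)<\infty$. Let $\{\mathbf{Z}(t)=(Z_1(t),Z_2(t))^T\}_{t\in\mathbb{Z}}$ be i.i.d. bidimensional sub-Gaussian random vectors with characteristic function $$\mathrm{E}\exp\{i\theta_1Z_1(t)+i\theta_2Z_2(t)\}=\exp\left\{-\left(\tfrac12\right)^{\alpha/2}\left|\theta_1^2R_{11}+2\theta_1\theta_2R_{12}+\theta_2^2R_{22}\right|^{\alpha/2}\right\},$$ where $R=\begin{pmatrix}R_{11}&R_{12}\\R_{12}&R_{22}\end{pmatrix}$ is the covariance matrix of the underlying zero-mean Gaussian vector. Let $$X_1(t)=\sum_{j=0}^{\infty}\left(a_1^{(j)}Z_1(t-j)+a_2^{(j)}Z_2(t-j)\right),\qquad X_2(t)=\sum_{j=0}^{\infty}\left(a_3^{(j)}Z_1(t-j)+a_4^{(j)}Z_2(t-j)\right).$$ Write $Q(u,v)=u^2R_{11}+2uvR_{12}+v^2R_{22}$. Then for every integer $h\ge0$: (a) $$\mathrm{CD}(X_1(t),X_2(t+h))=\left(\tfrac12\right)^{\alpha/2}\sum_{j=0}^\infty\left|Q(a_1^{(j)},a_2^{(j)})\right|^{\alpha/2}+\left(\tfrac12\right)^{\alpha/2}\sum_{j=0}^\infty\left|Q(a_3^{(j+h)},a_4^{(j+h)})\right|^{\alpha/2}-\left(\tfrac12\right)^{\alpha/2}\sum_{j=0}^\infty\left|Q(a_1^{(j)}-a_3^{(j+h)},\,a_2^{(j)}-a_4^{(j+h)})\right|^{\alpha/2};$$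 (b) $$\mathrm{CD}(X_1(t),X_2(t-h))=\left(\tfrac12\right)^{\alpha/2}\sum_{j=0}^\infty\left|Q(a_1^{(j+h)},a_2^{(j+h)})\right|^{\alpha/2}+\left(\tfrac12\right)^{\alpha/2}\sum_{j=0}^\infty\left|Q(a_3^{(j)},a_4^{(j)})\right|^{\alpha/2}-\left(\tfrac12\right)^{\alpha/2}\sum_{j=0}^\infty\left|Q(a_1^{(j+h)}-a_3^{(j)},\,a_2^{(j+h)}-a_4^{(j)})\right|^{\alpha/2}.$$
   Context: A bidimensional sub-Gaussian vector is $\mathbf{Z}=(A^{1/2}G_1,A^{1/2}G_2)$ where $(G_1,G_2)$ is a zero-mean Gaussian vector with $R_{11}=\mathrm{E}G_1^2$, $R_{12}=\mathrm{E}G_1G_2$, $R_{22}=\mathrm{E}G_2^2$, and $A$ is independent of $(G_1,G_2)$ with totally right-skewed $\alpha/2$-stable distribution $S_{\alpha/2}(\cos(\pi\alpha/4)^{2/\alpha},1,0)$; its characteristic function is the one displayed in the claim. For a bidimensional process the cross-codifference is $$\mathrm{CD}(X_1(t),X_2(s))=\log\mathrm{E}\exp\{i(X_1(t)-X_2(s))\}-\log\mathrm{E}\exp\{iX_1(t)\}-\log\mathrm{E}\exp\{-iX_2(s)\}.$$ *)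

theory Defs
  imports "HOL-Analysis.Analysis" "HOL-Probability.Probability"
begin

primrec mat_power :: "real^2^2 \<Rightarrow> nat \<Rightarrow> real^2^2" where
  "mat_power A 0 = mat 1"
| "mat_power A (Suc n) = mat_power A n ** A"

definition a1 :: "real^2^2 \<Rightarrow> nat \<Rightarrow> real" where "a1 A j = mat_power A j $ 1 $ 1"
definition a2 :: "real^2^2 \<Rightarrow> nat \<Rightarrow> real" where "a2 A j = mat_power A j $ 1 $ 2"
definition a3 :: "real^2^2 \<Rightarrow> nat \<Rightarrow> real" where "a3 A j = mat_power A j $ 2 $ 1"
definition a4 :: "real^2^2 \<Rightarrow> nat \<Rightarrow> real" where "a4 A j = mat_power A j $ 2 $ 2"

definition Qf :: "real \<Rightarrow> real \<Rightarrow> real \<Rightarrow> real \<Rightarrow> real \<Rightarrow> real" where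
  "Qf R11 R12 R22 u v = u^2 * R11 + 2 * u * v * R12 + v^2 * R22"

text \<open>Cross-codifference of two real random variables Y1, Y2 on M
  (logarithm = principal complex logarithm of the characteristic function values).\<close>
definition CD :: "'a measure \<Rightarrow> ('a \<Rightarrow> real) \<Rightarrow> ('a \<Rightarrow> real) \<Rightarrow> complex" where
  "CD M Y1 Y2 =
     Ln (CLINT w|M. cis (Y1 w - Y2 w)) - Ln (CLINT w|M. cis (Y1 w)) - Ln (CLINT w|M. cis (- Y2 w))"

end

theory Submission
  imports Defs
begin

(*
  By independence, the characteristic function of a finite linear combination of the Z(t) is the
  product of the individual ones, so E exp(i sum_n (b1_n Z1(T-n) + b2_n Z2(T-n))) equals
  exp(-(1/2)^(alpha/2) sum_n |Q(b1_n, b2_n)|^(alpha/2)). Since alpha > 1, the truncation inequality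
  P(|X| >= 2/u) <= (1/u) int_{-u}^{u} (1 - Re phi_X) bounds the tails of every Z(t) by C s^(-alpha)
  uniformly in t, so the Z(t) have uniformly bounded first absolute moments. Hence absolutely
  summable coefficients make the series converge almost surely, and dominated convergence carries
  the formula over to the infinite sums. After shifting the coefficients of X1(t) or X2(t +- h) so
  that both start at the same time, X1(t) - X2(t +- h) and -X2(t +- h) are series of the same kind;
  all three characteristic functions are positive reals, so their principal logarithms are the
  exponents, and splitting off the first h terms of the sums gives both formulas.
*)

lemma sin_div_self_le:
  fixes y :: real
  shows "sin y / y \<le> 1" and "2 \<le> \<bar>y\<bar> \<Longrightarrow> sin y / y \<le> 1 / 2"
proof -
  have le: "sin y / y \<le> \<bar>sin y\<bar> / \<bar>y\<bar>"
    by (metis abs_divide abs_ge_self)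
  show "sin y / y \<le> 1"
    using le abs_sin_x_le_abs_x[of y] by (auto simp: divide_le_eq_1)
  assume "2 \<le> \<bar>y\<bar>"
  have "\<bar>sin y\<bar> / \<bar>y\<bar> \<le> 1 / \<bar>y\<bar>" by (rule divide_right_mono) auto
  also have "\<dots> \<le> 1 / 2" using \<open>2 \<le> \<bar>y\<bar>\<close> by (simp add: field_simps)
  finally show "sin y / y \<le> 1 / 2" using le by linarith
qed

lemma integral_one_minus_cos_ge:
  fixes u x :: real
  assumes "0 < u"
  shows "u * indicator {x. 2 / u \<le> \<bar>x\<bar>} x \<le> (LBINT t:{-u..u}. 1 - cos (t * x))"
proof (cases "x = 0")
  case True
  then show ?thesis using assms by (simp add: indicator_def)
next
  case False
  have deriv: "((\<lambda>t. t - sin (t * x) / x) has_vector_derivative 1 - cos (t * x))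
      (at t within {-u..u})" for t
    using False
    by (auto intro!: derivative_eq_intros
        simp: has_real_derivative_iff_has_vector_derivative[symmetric])
  define s where "s = sin (u * x) / (u * x)"
  have "(LBINT t:{-u..u}. 1 - cos (t * x)) = 2 * u * (1 - s)"
    unfolding set_lebesgue_integral_def s_def
    using assms False
    by (subst integral_FTC_atLeastAtMost[OF _ deriv])
       (auto intro!: continuous_intros simp: field_simps)
  moreover have "0 \<le> u * (1 - s)"
    using assms sin_div_self_le(1)[of "u * x"] unfolding s_def[symmetric] by simp
  moreover have "0 \<le> u * (1 - 2 * s)" if "2 / u \<le> \<bar>x\<bar>"
  proof -
    have "2 \<le> \<bar>u * x\<bar>" using assms that by (simp add: abs_mult field_simps)
    then have "s \<le> 1 / 2" unfolding s_def by (rule sin_div_self_le(2))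
    then show ?thesis using assms by simp
  qed
  ultimately show ?thesis by (auto simp: indicator_def algebra_simps)
qed

lemma (in prob_space) truncation_inequality:
  fixes X :: "'a \<Rightarrow> real"
  assumes X[measurable]: "X \<in> borel_measurable M" and "0 < u"
  shows "u * prob {w\<in>space M. 2 / u \<le> \<bar>X w\<bar>} \<le>
      (LBINT t:{-u..u}. 1 - expectation (\<lambda>w. cos (t * X w)))"
    and "set_integrable lborel {-u..u} (\<lambda>t. 1 - expectation (\<lambda>w. cos (t * X w)))"
proof -
  interpret P: pair_sigma_finite M lborel ..
  define F where "F w t = indicator {-u..u} t * (1 - cos (t * X w))" for w t
  have [measurable]: "case_prod F \<in> borel_measurable (M \<Otimes>\<^sub>M lborel)"
    unfolding F_def by measurable
  have intF: "integrable (M \<Otimes>\<^sub>M lborel) (case_prod F)"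
  proof (rule integrableI_bounded_set[where A="space M \<times> {-u..u}" and B=2])
    show "emeasure (M \<Otimes>\<^sub>M lborel) (space M \<times> {-u..u}) < \<infinity>"
      using \<open>0 < u\<close>
      by (simp add: lborel.emeasure_pair_measure_Times emeasure_space_1 ennreal_mult_less_top)
  qed (auto simp: F_def space_pair_measure indicator_def)
  have inner: "(\<integral>w. F w t \<partial>M) = indicator {-u..u} t * (1 - expectation (\<lambda>w. cos (t * X w)))" for t
    unfolding F_def by (simp add: prob_space integrable_const_bound[where B=1])
  show "set_integrable lborel {-u..u} (\<lambda>t. 1 - expectation (\<lambda>w. cos (t * X w)))"
    using P.integrable_snd[OF intF] unfolding set_integrable_def inner by (simp add: mult.commute)
  have "(LBINT t:{-u..u}. 1 - expectation (\<lambda>w. cos (t * X w))) = (\<integral>t. (\<integral>w. F w t \<partial>M) \<partial>lborel)"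
    unfolding set_lebesgue_integral_def inner by simp
  also have "\<dots> = (\<integral>w. (LBINT t:{-u..u}. 1 - cos (t * X w)) \<partial>M)"
    by (simp only: P.Fubini_integral[OF intF]) (simp add: set_lebesgue_integral_def F_def)
  also have "\<dots> \<ge> (\<integral>w. u * indicator {x. 2 / u \<le> \<bar>x\<bar>} (X w) \<partial>M)"
  proof (rule integral_mono)
    show "integrable M (\<lambda>w. LBINT t:{-u..u}. 1 - cos (t * X w))"
      using P.integrable_fst[OF intF] unfolding set_lebesgue_integral_def F_def by simp
  qed (auto intro: integral_one_minus_cos_ge[OF \<open>0 < u\<close>] integrable_const_bound[where B=1])
  also have "(\<integral>w. u * indicator {x. 2 / u \<le> \<bar>x\<bar>} (X w) \<partial>M) =
      (\<integral>w. u * indicator {w\<in>space M. 2 / u \<le> \<bar>X w\<bar>} w \<partial>M)"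
    by (rule Bochner_Integration.integral_cong) (auto split: split_indicator)
  also have "\<dots> = u * prob {w\<in>space M. 2 / u \<le> \<bar>X w\<bar>}"
    by simp
  finally show "u * prob {w\<in>space M. 2 / u \<le> \<bar>X w\<bar>} \<le>
      (LBINT t:{-u..u}. 1 - expectation (\<lambda>w. cos (t * X w)))" .
qed

lemma (in prob_space) prob_abs_ge_le_of_char_bound:
  fixes X :: "'a \<Rightarrow> real"
  assumes X[measurable]: "X \<in> borel_measurable M"
    and char_bound: "\<And>\<theta>. 1 - expectation (\<lambda>w. cos (\<theta> * X w)) \<le> K * \<bar>\<theta>\<bar> powr \<alpha>"
    and "0 \<le> K" "0 \<le> \<alpha>" "0 < s"
  shows "prob {w\<in>space M. s \<le> \<bar>X w\<bar>} \<le> 2 * K * (2 / s) powr \<alpha>"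
proof -
  define u where "u = 2 / s"
  have "0 < u" using \<open>0 < s\<close> by (simp add: u_def)
  have "u * prob {w\<in>space M. 2 / u \<le> \<bar>X w\<bar>} \<le>
      (LBINT t:{-u..u}. 1 - expectation (\<lambda>w. cos (t * X w)))"
    by (rule truncation_inequality(1)[OF X \<open>0 < u\<close>])
  also have "\<dots> \<le> (LBINT t:{-u..u}. K * u powr \<alpha>)"
  proof (rule set_integral_mono)
    fix t assume "t \<in> {-u..u}"
    then have "\<bar>t\<bar> powr \<alpha> \<le> u powr \<alpha>" using \<open>0 \<le> \<alpha>\<close> by (intro powr_mono2) auto
    then show "1 - expectation (\<lambda>w. cos (t * X w)) \<le> K * u powr \<alpha>"
      using char_bound[of t] mult_left_mono[OF _ \<open>0 \<le> K\<close>] by (meson order_trans)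
  qed (auto intro: truncation_inequality(2)[OF X \<open>0 < u\<close>] borel_integrable_atLeastAtMost')
  also have "\<dots> = u * (2 * K * u powr \<alpha>)"
    using \<open>0 < u\<close> by (simp add: set_integral_const)
  finally have "prob {w\<in>space M. 2 / u \<le> \<bar>X w\<bar>} \<le> 2 * K * u powr \<alpha>"
    using \<open>0 < u\<close> by (rule mult_left_le_imp_le)
  moreover have "2 / u = s"
    using \<open>0 < s\<close> by (simp add: u_def)
  ultimately show ?thesis by (simp add: u_def)
qed

lemma ennreal_abs_le_suminf_indicator:
  fixes x :: real
  shows "ennreal \<bar>x\<bar> \<le> 1 + (\<Sum>m. indicator {y. real (Suc m) \<le> \<bar>y\<bar>} x)"
proof -
  define k where "k = nat \<lfloor>\<bar>x\<bar>\<rfloor>"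
  have "\<bar>x\<bar> \<le> 1 + real k"
    unfolding k_def by linarith
  then have "ennreal \<bar>x\<bar> \<le> ennreal (1 + real k)"
    by (rule ennreal_leI)
  also have "\<dots> = 1 + of_nat k"
    by (simp add: ennreal_of_nat_eq_real_of_nat ennreal_plus)
  also have "(of_nat k :: ennreal) = (\<Sum>m<k. indicator {y. real (Suc m) \<le> \<bar>y\<bar>} x)"
  proof -
    have "real (Suc m) \<le> \<bar>x\<bar>" if "m < k" for m
      using that unfolding k_def by linarith
    then show ?thesis by (simp add: indicator_def)
  qed
  also have "\<dots> \<le> (\<Sum>m. indicator {y. real (Suc m) \<le> \<bar>y\<bar>} x)"
    by (intro sum_le_suminf summableI) auto
  finally show ?thesis by (simp add: add_left_mono)
qed

lemma summable_div_Suc_powr: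
  fixes c :: real
  assumes "0 \<le> c" "1 < \<alpha>"
  shows "summable (\<lambda>m. (c / Suc m) powr \<alpha>)"
proof -
  have "summable (\<lambda>n. real n powr - \<alpha>)"
    using \<open>1 < \<alpha>\<close> by (simp add: summable_real_powr_iff)
  then have "summable (\<lambda>m. real (Suc m) powr - \<alpha>)"
    by (subst summable_Suc_iff)
  then have "summable (\<lambda>m. c powr \<alpha> * real (Suc m) powr - \<alpha>)"
    by (rule summable_mult)
  then show ?thesis
    using \<open>0 \<le> c\<close> by (simp add: powr_divide powr_minus_divide)
qed

lemma (in prob_space) nn_integral_abs_le_of_char_bound:
  fixes X :: "'a \<Rightarrow> real"
  assumes X[measurable]: "X \<in> borel_measurable M"
    and char_bound: "\<And>\<theta>. 1 - expectation (\<lambda>w. cos (\<theta> * X w)) \<le> K * \<bar>\<theta>\<bar> powr \<alpha>"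
    and "0 \<le> K" "1 < \<alpha>"
  shows "(\<integral>\<^sup>+w. \<bar>X w\<bar> \<partial>M) \<le> ennreal (1 + (\<Sum>m. 2 * K * (2 / Suc m) powr \<alpha>))"
proof -
  define f where "f m = 2 * K * (2 / Suc m) powr \<alpha>" for m :: nat
  have "summable f"
    unfolding f_def using \<open>1 < \<alpha>\<close> by (intro summable_mult summable_div_Suc_powr) auto
  have "0 \<le> f m" for m
    unfolding f_def using \<open>0 \<le> K\<close> by simp
  have tail: "emeasure M {w\<in>space M. real (Suc m) \<le> \<bar>X w\<bar>} \<le> f m" for m
    using prob_abs_ge_le_of_char_bound[OF X char_bound \<open>0 \<le> K\<close>, of "real (Suc m)"] \<open>1 < \<alpha>\<close>
    by (simp add: emeasure_eq_measure f_def ennreal_leI)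
  have "(\<integral>\<^sup>+w. \<bar>X w\<bar> \<partial>M) \<le> (\<integral>\<^sup>+w. 1 + (\<Sum>m. indicator {w\<in>space M. real (Suc m) \<le> \<bar>X w\<bar>} w) \<partial>M)"
    using ennreal_abs_le_suminf_indicator
    by (intro nn_integral_mono) (simp add: indicator_def)
  also have "\<dots> = 1 + (\<Sum>m. emeasure M {w\<in>space M. real (Suc m) \<le> \<bar>X w\<bar>})"
    by (subst nn_integral_add) (auto simp: nn_integral_suminf emeasure_space_1)
  also have "\<dots> \<le> 1 + (\<Sum>m. ennreal (f m))"
    by (intro add_left_mono suminf_le summableI tail)
  also have "\<dots> = ennreal (1 + suminf f)"
    using \<open>summable f\<close> \<open>\<And>m. 0 \<le> f m\<close> by (simp add: suminf_ennreal2 ennreal_plus suminf_nonneg)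
  finally show ?thesis unfolding f_def .
qed

lemma (in prob_space) expectation_cos_eq_Re:
  fixes X :: "'a \<Rightarrow> real"
  assumes [measurable]: "X \<in> borel_measurable M"
  shows "expectation (\<lambda>w. cos (X w)) = Re (CLINT w|M. cis (X w))"
proof -
  have "integrable M (\<lambda>w. cis (X w))"
    unfolding cis_conv_exp by (rule integrable_const_bound[where B=1]) auto
  then show ?thesis
    by (simp flip: integral_Re)
qed

lemma square_powr_half:
  fixes x :: real
  shows "(x^2) powr (\<alpha>/2) = \<bar>x\<bar> powr \<alpha>"
proof -
  have "x^2 = \<bar>x\<bar> powr 2"
    using powr_numeral[of "\<bar>x\<bar>" "num.Bit0 num.One"] by simp
  also have "\<dots> powr (\<alpha>/2) = \<bar>x\<bar> powr \<alpha>"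
    by (simp only: powr_powr) simp
  finally show ?thesis .
qed

lemma one_minus_exp_le_powr:
  fixes \<theta> :: real
  assumes "0 \<le> c" "0 \<le> R" "R \<le> S" "0 \<le> \<alpha>"
  shows "1 - exp (- c * \<bar>\<theta>^2 * R\<bar> powr (\<alpha>/2)) \<le> c * S powr (\<alpha>/2) * \<bar>\<theta>\<bar> powr \<alpha>"
proof -
  have "\<bar>\<theta>^2 * R\<bar> powr (\<alpha>/2) = \<bar>\<theta>\<bar> powr \<alpha> * R powr (\<alpha>/2)"
    using \<open>0 \<le> R\<close> by (simp add: abs_mult powr_mult square_powr_half)
  also have "\<dots> \<le> \<bar>\<theta>\<bar> powr \<alpha> * S powr (\<alpha>/2)"
    using assms by (intro mult_left_mono powr_mono2) auto
  finally have "c * \<bar>\<theta>^2 * R\<bar> powr (\<alpha>/2) \<le> c * S powr (\<alpha>/2) * \<bar>\<theta>\<bar> powr \<alpha>"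
    using \<open>0 \<le> c\<close> by (simp add: mult_left_mono mult_ac)
  moreover have "1 - exp (- (c * \<bar>\<theta>^2 * R\<bar> powr (\<alpha>/2))) \<le> c * \<bar>\<theta>^2 * R\<bar> powr (\<alpha>/2)"
    using exp_ge_add_one_self[of "- (c * \<bar>\<theta>^2 * R\<bar> powr (\<alpha>/2))"] by linarith
  ultimately show ?thesis by simp
qed

lemma abs_Qf_le:
  assumes "0 \<le> R11" "0 \<le> R22"
  shows "\<bar>Qf R11 R12 R22 u v\<bar> \<le> (R11 + \<bar>R12\<bar> + R22) * (\<bar>u\<bar> + \<bar>v\<bar>)^2"
proof -
  have "\<bar>Qf R11 R12 R22 u v\<bar> \<le> u^2 * R11 + 2 * \<bar>u\<bar> * \<bar>v\<bar> * \<bar>R12\<bar> + v^2 * R22"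
    using assms unfolding Qf_def
    by (simp add: abs_mult abs_triangle_ineq4 order_trans[OF abs_triangle_ineq])
  also have "\<dots> \<le> (R11 + \<bar>R12\<bar> + R22) * (u^2 + 2 * \<bar>u\<bar> * \<bar>v\<bar> + v^2)"
  proof -
    have "0 \<le> (\<bar>R12\<bar> + R22) * u^2 + (R11 + R22) * (2 * \<bar>u\<bar> * \<bar>v\<bar>) + (R11 + \<bar>R12\<bar>) * v^2"
      using assms by (intro add_nonneg_nonneg mult_nonneg_nonneg) auto
    then show ?thesis by (simp add: algebra_simps)
  qed
  also have "\<dots> = (R11 + \<bar>R12\<bar> + R22) * (\<bar>u\<bar> + \<bar>v\<bar>)^2"
    by (simp add: power2_eq_square algebra_simps)
  finally show ?thesis .
qed

lemma Qf_uminus: "Qf R11 R12 R22 (- u) (- v) = Qf R11 R12 R22 u v"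
  by (simp add: Qf_def)

lemma summable_abs_Qf_powr:
  fixes b1 b2 :: "nat \<Rightarrow> real"
  assumes "0 \<le> R11" "0 \<le> R22" "1 \<le> \<alpha>"
    and summable: "summable (\<lambda>n. \<bar>b1 n\<bar> + \<bar>b2 n\<bar>)"
  shows "summable (\<lambda>n. \<bar>Qf R11 R12 R22 (b1 n) (b2 n)\<bar> powr (\<alpha>/2))"
proof (rule summable_comparison_test_ev)
  define K where "K = R11 + \<bar>R12\<bar> + R22"
  have "0 \<le> K" unfolding K_def using assms by simp
  show "summable (\<lambda>n. K powr (\<alpha>/2) * (\<bar>b1 n\<bar> + \<bar>b2 n\<bar>))"
    using summable by (rule summable_mult)
  have "(\<lambda>n. \<bar>b1 n\<bar> + \<bar>b2 n\<bar>) \<longlonglongrightarrow> 0"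
    using summable by (rule summable_LIMSEQ_zero)
  then have "eventually (\<lambda>n. \<bar>b1 n\<bar> + \<bar>b2 n\<bar> < 1) sequentially"
    by (rule order_tendstoD(2)) simp
  then show "eventually (\<lambda>n. norm (\<bar>Qf R11 R12 R22 (b1 n) (b2 n)\<bar> powr (\<alpha>/2))
      \<le> K powr (\<alpha>/2) * (\<bar>b1 n\<bar> + \<bar>b2 n\<bar>)) sequentially"
  proof eventually_elim
    case (elim n)
    define x where "x = \<bar>b1 n\<bar> + \<bar>b2 n\<bar>"
    have "0 \<le> x" "x \<le> 1" using elim unfolding x_def by auto
    have "\<bar>Qf R11 R12 R22 (b1 n) (b2 n)\<bar> powr (\<alpha>/2) \<le> (K * x^2) powr (\<alpha>/2)"
      using abs_Qf_le[OF assms(1,2)] assms(3) unfolding K_def x_def by (intro powr_mono2) auto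
    also have "\<dots> = K powr (\<alpha>/2) * x powr \<alpha>"
      using \<open>0 \<le> K\<close> \<open>0 \<le> x\<close> by (simp add: powr_mult square_powr_half)
    also have "\<dots> \<le> K powr (\<alpha>/2) * x"
      using powr_le_one_le[of x \<alpha>] \<open>0 \<le> x\<close> \<open>x \<le> 1\<close> assms(3)
      by (cases "x = 0") (auto intro: mult_left_mono)
    finally show ?case by (simp add: x_def)
  qed
qed

lemma (in prob_space) char_sum_indep:
  fixes Z1 Z2 :: "'i \<Rightarrow> 'a \<Rightarrow> real"
  assumes [measurable]: "\<And>i. Z1 i \<in> borel_measurable M" "\<And>i. Z2 i \<in> borel_measurable M"
    and indep: "indep_vars (\<lambda>_. borel) (\<lambda>i w. (Z1 i w, Z2 i w)) I" and "finite I"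
  shows "(CLINT w|M. cis (\<Sum>i\<in>I. \<theta>1 i * Z1 i w + \<theta>2 i * Z2 i w))
    = (\<Prod>i\<in>I. CLINT w|M. cis (\<theta>1 i * Z1 i w + \<theta>2 i * Z2 i w))"
proof -
  define F where "F i w = cis (\<theta>1 i * Z1 i w + \<theta>2 i * Z2 i w)" for i w
  have "(\<lambda>p. cis (\<theta>1 i * fst p + \<theta>2 i * snd p)) \<in> borel \<rightarrow>\<^sub>M borel" for i
    unfolding cis_conv_exp by (intro borel_measurable_continuous_onI continuous_intros)
  from indep_vars_compose2[OF indep this]
  have "indep_vars (\<lambda>_. borel) F I"
    by (simp add: F_def[abs_def])
  moreover have "integrable M (F i)" for i
    unfolding F_def cis_conv_exp by (rule integrable_const_bound[where B=1]) auto
  ultimately have "(CLINT w|M. (\<Prod>i\<in>I. F i w)) = (\<Prod>i\<in>I. CLINT w|M. F i w)"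
    using \<open>finite I\<close> by (intro indep_vars_lebesgue_integral) auto
  moreover have "cis (\<Sum>i\<in>I. \<theta>1 i * Z1 i w + \<theta>2 i * Z2 i w) = (\<Prod>i\<in>I. F i w)" for w
    unfolding F_def cis_conv_exp using \<open>finite I\<close>
    by (simp add: sum_distrib_left exp_sum)
  ultimately show ?thesis
    unfolding F_def by simp
qed

definition delay :: "nat \<Rightarrow> (nat \<Rightarrow> 'a::zero) \<Rightarrow> nat \<Rightarrow> 'a" where
  "delay h f n = (if h \<le> n then f (n - h) else 0)"

lemma sums_delay_iff:
  fixes f :: "nat \<Rightarrow> 'a::real_normed_vector"
  shows "delay h f sums s \<longleftrightarrow> f sums s"
proof -
  have "(\<lambda>n. delay h f (n + h)) = f"
    by (simp add: delay_def)
  moreover have "delay h f i = 0" if "i < h" for i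
    using that by (simp add: delay_def)
  ultimately show ?thesis
    using sums_zero_iff_shift[of h "delay h f" s] by simp
qed

lemma suminf_delay:
  fixes f :: "nat \<Rightarrow> 'a::real_normed_vector"
  shows "suminf (delay h f) = suminf f"
  by (simp add: suminf_def sums_delay_iff)

lemma summable_delay_iff:
  fixes f :: "nat \<Rightarrow> 'a::real_normed_vector"
  shows "summable (delay h f) \<longleftrightarrow> summable f"
  by (simp add: summable_def sums_delay_iff)

lemma summable_abs_delay:
  fixes b1 b2 :: "nat \<Rightarrow> real"
  assumes "summable (\<lambda>n. \<bar>b1 n\<bar> + \<bar>b2 n\<bar>)"
  shows "summable (\<lambda>n. \<bar>delay h b1 n\<bar> + \<bar>delay h b2 n\<bar>)"
proof -
  have "(\<lambda>n. \<bar>delay h b1 n\<bar> + \<bar>delay h b2 n\<bar>) = delay h (\<lambda>n. \<bar>b1 n\<bar> + \<bar>b2 n\<bar>)"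
    by (auto simp: delay_def)
  then show ?thesis
    using assms by (simp add: summable_delay_iff)
qed

locale subgaussian_noise = prob_space M for M :: "'a measure" +
  fixes \<alpha> R11 R12 R22 :: real and Z1 Z2 :: "int \<Rightarrow> 'a \<Rightarrow> real"
  assumes alpha_gt_1: "1 < \<alpha>"
    and R11_nonneg: "0 \<le> R11" and R22_nonneg: "0 \<le> R22"
    and Z1_measurable: "\<And>t. Z1 t \<in> borel_measurable M"
    and Z2_measurable: "\<And>t. Z2 t \<in> borel_measurable M"
    and indep_Z: "indep_vars (\<lambda>_. borel) (\<lambda>t w. (Z1 t w, Z2 t w)) UNIV"
    and char_Z: "\<And>t u v. (CLINT w|M. cis (u * Z1 t w + v * Z2 t w)) =
      complex_of_real (exp (- ((1/2) powr (\<alpha>/2)) * \<bar>Qf R11 R12 R22 u v\<bar> powr (\<alpha>/2)))"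
begin

declare Z1_measurable[measurable] Z2_measurable[measurable]

text \<open>Where the series diverges, \<open>linear_process\<close> is an unspecified junk value; for absolutely
  summable coefficients this happens only on a null set (\<open>AE_summable_linear\<close>).\<close>

definition linear_process :: "(nat \<Rightarrow> real) \<Rightarrow> (nat \<Rightarrow> real) \<Rightarrow> int \<Rightarrow> 'a \<Rightarrow> real" where
  "linear_process b1 b2 T w = (\<Sum>n. b1 n * Z1 (T - int n) w + b2 n * Z2 (T - int n) w)"

definition Q_sum :: "(nat \<Rightarrow> real) \<Rightarrow> (nat \<Rightarrow> real) \<Rightarrow> real" where
  "Q_sum b1 b2 = (\<Sum>n. \<bar>Qf R11 R12 R22 (b1 n) (b2 n)\<bar> powr (\<alpha>/2))"

lemma linear_process_measurable[measurable]: "linear_process b1 b2 T \<in> borel_measurable M"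
  unfolding linear_process_def by measurable

lemma nn_integral_abs_Z_bounded:
  obtains B where "0 \<le> B" "\<And>t. (\<integral>\<^sup>+w. \<bar>Z1 t w\<bar> \<partial>M) \<le> ennreal B"
    "\<And>t. (\<integral>\<^sup>+w. \<bar>Z2 t w\<bar> \<partial>M) \<le> ennreal B"
proof
  define K where "K = (1/2) powr (\<alpha>/2) * (R11 + R22) powr (\<alpha>/2)"
  show "0 \<le> 1 + (\<Sum>m. 2 * K * (2 / Suc m) powr \<alpha>)"
    unfolding K_def using alpha_gt_1
    by (intro add_nonneg_nonneg suminf_nonneg summable_mult summable_div_Suc_powr) auto
  show "(\<integral>\<^sup>+w. \<bar>Z1 t w\<bar> \<partial>M) \<le> ennreal (1 + (\<Sum>m. 2 * K * (2 / Suc m) powr \<alpha>))" for t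
  proof (rule nn_integral_abs_le_of_char_bound[OF Z1_measurable _ _ alpha_gt_1])
    show "1 - expectation (\<lambda>w. cos (\<theta> * Z1 t w)) \<le> K * \<bar>\<theta>\<bar> powr \<alpha>" for \<theta>
      using char_Z[where t=t and u=\<theta> and v=0] alpha_gt_1 R11_nonneg R22_nonneg
        one_minus_exp_le_powr[of "(1/2) powr (\<alpha>/2)" R11 "R11 + R22" \<alpha> \<theta>]
      by (simp add: expectation_cos_eq_Re Qf_def K_def mult_ac)
  qed (simp add: K_def)
  show "(\<integral>\<^sup>+w. \<bar>Z2 t w\<bar> \<partial>M) \<le> ennreal (1 + (\<Sum>m. 2 * K * (2 / Suc m) powr \<alpha>))" for t
  proof (rule nn_integral_abs_le_of_char_bound[OF Z2_measurable _ _ alpha_gt_1])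
    show "1 - expectation (\<lambda>w. cos (\<theta> * Z2 t w)) \<le> K * \<bar>\<theta>\<bar> powr \<alpha>" for \<theta>
      using char_Z[where t=t and u=0 and v=\<theta>] alpha_gt_1 R11_nonneg R22_nonneg
        one_minus_exp_le_powr[of "(1/2) powr (\<alpha>/2)" R22 "R11 + R22" \<alpha> \<theta>]
      by (simp add: expectation_cos_eq_Re Qf_def K_def mult_ac)
  qed (simp add: K_def)
qed

lemma AE_summable_linear:
  assumes summable: "summable (\<lambda>n. \<bar>b1 n\<bar> + \<bar>b2 n\<bar>)"
  shows "AE w in M. summable (\<lambda>n. b1 n * Z1 (T - int n) w + b2 n * Z2 (T - int n) w)"
proof -
  obtain B where "0 \<le> B" and B1: "\<And>t. (\<integral>\<^sup>+w. \<bar>Z1 t w\<bar> \<partial>M) \<le> ennreal B"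
    and B2: "\<And>t. (\<integral>\<^sup>+w. \<bar>Z2 t w\<bar> \<partial>M) \<le> ennreal B"
    using nn_integral_abs_Z_bounded by blast
  define F where
    "F n w = ennreal (\<bar>b1 n\<bar> * \<bar>Z1 (T - int n) w\<bar> + \<bar>b2 n\<bar> * \<bar>Z2 (T - int n) w\<bar>)" for n w
  have [measurable]: "F n \<in> borel_measurable M" for n
    unfolding F_def by measurable
  have "(\<integral>\<^sup>+w. F n w \<partial>M) =
      ennreal \<bar>b1 n\<bar> * (\<integral>\<^sup>+w. \<bar>Z1 (T - int n) w\<bar> \<partial>M) +
      ennreal \<bar>b2 n\<bar> * (\<integral>\<^sup>+w. \<bar>Z2 (T - int n) w\<bar> \<partial>M)" for n
    unfolding F_def by (simp add: ennreal_plus ennreal_mult nn_integral_add nn_integral_cmult)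
  also have "\<dots> n \<le> ennreal \<bar>b1 n\<bar> * ennreal B + ennreal \<bar>b2 n\<bar> * ennreal B" for n
    by (intro add_mono mult_left_mono B1 B2) auto
  also have "\<dots> n = ennreal ((\<bar>b1 n\<bar> + \<bar>b2 n\<bar>) * B)" for n
    using \<open>0 \<le> B\<close> by (simp add: distrib_right ennreal_plus ennreal_mult)
  finally have F_le: "(\<integral>\<^sup>+w. F n w \<partial>M) \<le> ennreal ((\<bar>b1 n\<bar> + \<bar>b2 n\<bar>) * B)" for n .
  have "(\<integral>\<^sup>+w. (\<Sum>n. F n w) \<partial>M) = (\<Sum>n. \<integral>\<^sup>+w. F n w \<partial>M)"
    by (simp add: nn_integral_suminf)
  also have "\<dots> \<le> (\<Sum>n. ennreal ((\<bar>b1 n\<bar> + \<bar>b2 n\<bar>) * B))"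
    by (intro suminf_le F_le summableI)
  also have "\<dots> < \<infinity>"
    using summable \<open>0 \<le> B\<close> by (simp add: suminf_ennreal2 summable_mult2)
  finally have "AE w in M. (\<Sum>n. F n w) \<noteq> \<infinity>"
    by (intro nn_integral_PInf_AE) auto
  then show ?thesis
  proof eventually_elim
    case (elim w)
    then have "summable (\<lambda>n. \<bar>b1 n\<bar> * \<bar>Z1 (T - int n) w\<bar> + \<bar>b2 n\<bar> * \<bar>Z2 (T - int n) w\<bar>)"
      unfolding F_def by (intro summable_suminf_not_top) auto
    then show ?case
      by (rule summable_comparison_test') (simp add: abs_mult[symmetric] abs_triangle_ineq)
  qed
qed

lemma char_partial_sum:
  "(CLINT w|M. cis (\<Sum>n<N. b1 n * Z1 (T - int n) w + b2 n * Z2 (T - int n) w)) =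
    complex_of_real (exp (- ((1/2) powr (\<alpha>/2)) *
      (\<Sum>n<N. \<bar>Qf R11 R12 R22 (b1 n) (b2 n)\<bar> powr (\<alpha>/2))))"
proof -
  have inj: "inj_on (\<lambda>n. T - int n) {..<N}"
    by (auto simp: inj_on_def)
  define I where "I = (\<lambda>n. T - int n) ` {..<N}"
  have "(CLINT w|M. cis (\<Sum>n<N. b1 n * Z1 (T - int n) w + b2 n * Z2 (T - int n) w)) =
      (CLINT w|M. cis (\<Sum>s\<in>I. b1 (nat (T - s)) * Z1 s w + b2 (nat (T - s)) * Z2 s w))"
    unfolding I_def by (simp add: sum.reindex[OF inj])
  also have "\<dots> = (\<Prod>s\<in>I. CLINT w|M. cis (b1 (nat (T - s)) * Z1 s w + b2 (nat (T - s)) * Z2 s w))"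
    using indep_vars_subset[OF indep_Z subset_UNIV]
    by (intro char_sum_indep) (auto simp: I_def)
  also have "\<dots> = (\<Prod>n<N. complex_of_real
      (exp (- ((1/2) powr (\<alpha>/2)) * \<bar>Qf R11 R12 R22 (b1 n) (b2 n)\<bar> powr (\<alpha>/2))))"
    unfolding I_def by (simp add: prod.reindex[OF inj] char_Z)
  also have "\<dots> = complex_of_real (exp (- ((1/2) powr (\<alpha>/2)) *
      (\<Sum>n<N. \<bar>Qf R11 R12 R22 (b1 n) (b2 n)\<bar> powr (\<alpha>/2))))"
    by (simp add: exp_sum sum_distrib_left flip: of_real_prod)
  finally show ?thesis .
qed

lemma summable_abs_Qf:
  "summable (\<lambda>n. \<bar>b1 n\<bar> + \<bar>b2 n\<bar>) \<Longrightarrow> summable (\<lambda>n. \<bar>Qf R11 R12 R22 (b1 n) (b2 n)\<bar> powr (\<alpha>/2))"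
  using R11_nonneg R22_nonneg alpha_gt_1 by (intro summable_abs_Qf_powr) auto

lemma char_linear_process:
  assumes summable: "summable (\<lambda>n. \<bar>b1 n\<bar> + \<bar>b2 n\<bar>)"
  shows "(CLINT w|M. cis (linear_process b1 b2 T w)) =
    complex_of_real (exp (- ((1/2) powr (\<alpha>/2)) * Q_sum b1 b2))"
proof -
  define S where "S N w = (\<Sum>n<N. b1 n * Z1 (T - int n) w + b2 n * Z2 (T - int n) w)" for N w
  have "(\<lambda>N. CLINT w|M. cis (S N w)) \<longlonglongrightarrow> (CLINT w|M. cis (linear_process b1 b2 T w))"
  proof (rule integral_dominated_convergence[where w="\<lambda>_. 1"])
    show "AE w in M. (\<lambda>N. cis (S N w)) \<longlonglongrightarrow> cis (linear_process b1 b2 T w)"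
      using AE_summable_linear[OF summable, of T]
    proof eventually_elim
      case (elim w)
      then have "(\<lambda>N. S N w) \<longlonglongrightarrow> linear_process b1 b2 T w"
        unfolding S_def linear_process_def by (simp add: summable_LIMSEQ)
      then show ?case
        unfolding cis_conv_exp by (intro tendsto_intros)
    qed
  qed (auto simp: S_def linear_process_def cis_conv_exp)
  moreover have "(\<lambda>N. CLINT w|M. cis (S N w)) \<longlonglongrightarrow>
      complex_of_real (exp (- ((1/2) powr (\<alpha>/2)) * Q_sum b1 b2))"
    unfolding S_def char_partial_sum Q_sum_def
    using summable_LIMSEQ[OF summable_abs_Qf[OF summable]] by (intro tendsto_intros)
  ultimately show ?thesis
    by (rule LIMSEQ_unique)
qed

lemma Q_sum_diff_commute:
  "Q_sum (\<lambda>n. c1 n - d1 n) (\<lambda>n. c2 n - d2 n) = Q_sum (\<lambda>n. d1 n - c1 n) (\<lambda>n. d2 n - c2 n)"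
  using Qf_uminus[of _ _ _ "d1 _ - c1 _" "d2 _ - c2 _"] by (simp add: Q_sum_def)

lemma char_linear_process_diff:
  assumes summable_c: "summable (\<lambda>n. \<bar>c1 n\<bar> + \<bar>c2 n\<bar>)"
    and summable_d: "summable (\<lambda>n. \<bar>d1 n\<bar> + \<bar>d2 n\<bar>)"
  shows "(CLINT w|M. cis (linear_process c1 c2 T w - linear_process d1 d2 T w)) =
    complex_of_real (exp (- ((1/2) powr (\<alpha>/2)) * Q_sum (\<lambda>n. c1 n - d1 n) (\<lambda>n. c2 n - d2 n)))"
proof -
  have "AE w in M. linear_process c1 c2 T w - linear_process d1 d2 T w =
      linear_process (\<lambda>n. c1 n - d1 n) (\<lambda>n. c2 n - d2 n) T w"
    using AE_summable_linear[OF summable_c, of T] AE_summable_linear[OF summable_d, of T]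
    by eventually_elim (simp add: linear_process_def suminf_diff[symmetric] algebra_simps)
  then have "(CLINT w|M. cis (linear_process c1 c2 T w - linear_process d1 d2 T w)) =
      (CLINT w|M. cis (linear_process (\<lambda>n. c1 n - d1 n) (\<lambda>n. c2 n - d2 n) T w))"
    by (intro integral_cong_AE)
       (auto simp: cis_conv_exp simp del: of_real_diff elim!: eventually_mono)
  also have "\<dots> = complex_of_real (exp (- ((1/2) powr (\<alpha>/2)) *
      Q_sum (\<lambda>n. c1 n - d1 n) (\<lambda>n. c2 n - d2 n)))"
  proof (rule char_linear_process)
    show "summable (\<lambda>n. \<bar>c1 n - d1 n\<bar> + \<bar>c2 n - d2 n\<bar>)"
      by (rule summable_comparison_test'[OF summable_add[OF summable_c summable_d]]) auto
  qed
  finally show ?thesis .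
qed

lemma CD_linear_process:
  assumes summable_c: "summable (\<lambda>n. \<bar>c1 n\<bar> + \<bar>c2 n\<bar>)"
    and summable_d: "summable (\<lambda>n. \<bar>d1 n\<bar> + \<bar>d2 n\<bar>)"
  shows "CD M (linear_process c1 c2 T) (linear_process d1 d2 T) = complex_of_real (
      (1/2) powr (\<alpha>/2) * Q_sum c1 c2 + (1/2) powr (\<alpha>/2) * Q_sum d1 d2
      - (1/2) powr (\<alpha>/2) * Q_sum (\<lambda>n. c1 n - d1 n) (\<lambda>n. c2 n - d2 n))"
proof -
  have "(CLINT w|M. cis (- linear_process d1 d2 T w)) =
      complex_of_real (exp (- ((1/2) powr (\<alpha>/2)) * Q_sum d1 d2))"
    using char_linear_process_diff[OF _ summable_d, of "\<lambda>_. 0" "\<lambda>_. 0" T]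
    by (simp add: linear_process_def Q_sum_def Qf_uminus)
  then show ?thesis
    unfolding CD_def
    by (simp add: char_linear_process_diff[OF summable_c summable_d]
        char_linear_process[OF summable_c] Ln_of_real)
qed

lemma linear_process_delay:
  "linear_process (delay h b1) (delay h b2) (T + int h) = linear_process b1 b2 T"
proof
  fix w
  have "delay h b1 n * Z1 (T + int h - int n) w + delay h b2 n * Z2 (T + int h - int n) w =
      delay h (\<lambda>j. b1 j * Z1 (T - int j) w + b2 j * Z2 (T - int j) w) n" for n
    by (cases "h \<le> n") (simp_all add: delay_def of_nat_diff algebra_simps)
  then show "linear_process (delay h b1) (delay h b2) (T + int h) w = linear_process b1 b2 T w"
    unfolding linear_process_def by (simp add: suminf_delay)
qed

lemma Q_sum_delay: "Q_sum (delay h b1) (delay h b2) = Q_sum b1 b2"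
proof -
  have "\<bar>Qf R11 R12 R22 (delay h b1 n) (delay h b2 n)\<bar> powr (\<alpha>/2) =
      delay h (\<lambda>j. \<bar>Qf R11 R12 R22 (b1 j) (b2 j)\<bar> powr (\<alpha>/2)) n" for n
    by (simp add: delay_def Qf_def)
  then show ?thesis
    unfolding Q_sum_def by (simp add: suminf_delay)
qed

lemma Q_sum_delay_diff:
  assumes summable_c: "summable (\<lambda>n. \<bar>c1 n\<bar> + \<bar>c2 n\<bar>)"
    and summable_d: "summable (\<lambda>n. \<bar>d1 n\<bar> + \<bar>d2 n\<bar>)"
  shows "Q_sum d1 d2 - Q_sum (\<lambda>n. delay h c1 n - d1 n) (\<lambda>n. delay h c2 n - d2 n) =
    Q_sum (\<lambda>j. d1 (j + h)) (\<lambda>j. d2 (j + h)) - Q_sum (\<lambda>j. c1 j - d1 (j + h)) (\<lambda>j. c2 j - d2 (j + h))"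
proof -
  define q where "q u v = \<bar>Qf R11 R12 R22 u v\<bar> powr (\<alpha>/2)" for u v
  have "summable (\<lambda>n. \<bar>delay h c1 n - d1 n\<bar> + \<bar>delay h c2 n - d2 n\<bar>)"
  proof (rule summable_comparison_test')
    show "summable (\<lambda>n. delay h (\<lambda>j. \<bar>c1 j\<bar> + \<bar>c2 j\<bar>) n + (\<bar>d1 n\<bar> + \<bar>d2 n\<bar>))"
      using summable_c summable_d by (rule_tac summable_add) (simp_all add: summable_delay_iff)
  qed (auto simp: delay_def
      intro: order_trans[OF add_mono[OF abs_triangle_ineq4 abs_triangle_ineq4]])
  then have "Q_sum (\<lambda>n. delay h c1 n - d1 n) (\<lambda>n. delay h c2 n - d2 n) =
      Q_sum (\<lambda>j. c1 j - d1 (j + h)) (\<lambda>j. c2 j - d2 (j + h)) + (\<Sum>n<h. q (d1 n) (d2 n))"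
    unfolding Q_sum_def q_def
    by (subst suminf_split_initial_segment[OF summable_abs_Qf, of _ _ h])
       (auto simp: delay_def Qf_uminus[of _ _ _ "d1 _" "d2 _", symmetric])
  moreover have "Q_sum d1 d2 = Q_sum (\<lambda>j. d1 (j + h)) (\<lambda>j. d2 (j + h)) + (\<Sum>n<h. q (d1 n) (d2 n))"
    unfolding Q_sum_def q_def
    by (rule suminf_split_initial_segment[OF summable_abs_Qf[OF summable_d]])
  ultimately show ?thesis by simp
qed

lemma CD_linear_process_lead:
  assumes summable_c: "summable (\<lambda>n. \<bar>c1 n\<bar> + \<bar>c2 n\<bar>)"
    and summable_d: "summable (\<lambda>n. \<bar>d1 n\<bar> + \<bar>d2 n\<bar>)"
  shows "CD M (linear_process c1 c2 T) (linear_process d1 d2 (T + int h)) = complex_of_real (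
      (1/2) powr (\<alpha>/2) * Q_sum c1 c2 + (1/2) powr (\<alpha>/2) * Q_sum (\<lambda>j. d1 (j + h)) (\<lambda>j. d2 (j + h))
      - (1/2) powr (\<alpha>/2) * Q_sum (\<lambda>j. c1 j - d1 (j + h)) (\<lambda>j. c2 j - d2 (j + h)))"
proof -
  let ?c = "(1/2) powr (\<alpha>/2)"
  have "CD M (linear_process c1 c2 T) (linear_process d1 d2 (T + int h)) =
      CD M (linear_process (delay h c1) (delay h c2) (T + int h))
        (linear_process d1 d2 (T + int h))"
    by (simp add: linear_process_delay)
  also have "\<dots> = complex_of_real (?c * Q_sum c1 c2 + ?c * (Q_sum d1 d2 -
      Q_sum (\<lambda>n. delay h c1 n - d1 n) (\<lambda>n. delay h c2 n - d2 n)))"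
    using summable_abs_delay[OF summable_c] summable_d
    by (simp add: CD_linear_process Q_sum_delay algebra_simps)
  also have "\<dots> = complex_of_real (?c * Q_sum c1 c2 + ?c * (Q_sum (\<lambda>j. d1 (j + h)) (\<lambda>j. d2 (j + h)) -
      Q_sum (\<lambda>j. c1 j - d1 (j + h)) (\<lambda>j. c2 j - d2 (j + h))))"
    by (simp only: Q_sum_delay_diff[OF summable_c summable_d])
  finally show ?thesis
    by (simp add: algebra_simps)
qed

lemma CD_linear_process_lag:
  assumes summable_c: "summable (\<lambda>n. \<bar>c1 n\<bar> + \<bar>c2 n\<bar>)"
    and summable_d: "summable (\<lambda>n. \<bar>d1 n\<bar> + \<bar>d2 n\<bar>)"
  shows "CD M (linear_process c1 c2 T) (linear_process d1 d2 (T - int h)) = complex_of_real (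
      (1/2) powr (\<alpha>/2) * Q_sum (\<lambda>j. c1 (j + h)) (\<lambda>j. c2 (j + h)) + (1/2) powr (\<alpha>/2) * Q_sum d1 d2
      - (1/2) powr (\<alpha>/2) * Q_sum (\<lambda>j. c1 (j + h) - d1 j) (\<lambda>j. c2 (j + h) - d2 j))"
proof -
  let ?c = "(1/2) powr (\<alpha>/2)"
  have "CD M (linear_process c1 c2 T) (linear_process d1 d2 (T - int h)) =
      CD M (linear_process c1 c2 T) (linear_process (delay h d1) (delay h d2) T)"
    using linear_process_delay[of h d1 d2 "T - int h"] by simp
  also have "\<dots> = complex_of_real (?c * Q_sum d1 d2 + ?c * (Q_sum c1 c2 -
      Q_sum (\<lambda>n. delay h d1 n - c1 n) (\<lambda>n. delay h d2 n - c2 n)))"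
    using summable_c summable_abs_delay[OF summable_d]
    by (simp add: CD_linear_process Q_sum_delay Q_sum_diff_commute[of c1] algebra_simps)
  also have "\<dots> = complex_of_real (?c * Q_sum d1 d2 + ?c * (Q_sum (\<lambda>j. c1 (j + h)) (\<lambda>j. c2 (j + h)) -
      Q_sum (\<lambda>j. d1 j - c1 (j + h)) (\<lambda>j. d2 j - c2 (j + h))))"
    by (simp only: Q_sum_delay_diff[OF summable_d summable_c])
  finally show ?thesis
    by (simp add: Q_sum_diff_commute[of d1] algebra_simps)
qed

end

theorem lemma4p1:
  fixes M :: "'a measure" and \<alpha> :: real and \<Theta> :: "real^2^2"
    and R11 R12 R22 :: real
    and Z1 Z2 :: "int \<Rightarrow> 'a \<Rightarrow> real"
    and X1 X2 :: "int \<Rightarrow> 'a \<Rightarrow> real"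
  assumes "prob_space M"
    and "1 < \<alpha>" and "\<alpha> < 2"
    and "summable (\<lambda>j. \<bar>a1 \<Theta> j\<bar> + \<bar>a2 \<Theta> j\<bar>)"
    and "summable (\<lambda>j. \<bar>a3 \<Theta> j\<bar> + \<bar>a4 \<Theta> j\<bar>)"
    and "R11 \<ge> 0" and "R22 \<ge> 0" and "R12^2 \<le> R11 * R22"
    and "\<And>t. Z1 t \<in> borel_measurable M" and "\<And>t. Z2 t \<in> borel_measurable M"
    and "prob_space.indep_vars M (\<lambda>_. borel) (\<lambda>t w. (Z1 t w, Z2 t w)) UNIV"
    and "\<And>t \<theta>1 \<theta>2. (CLINT w|M. cis (\<theta>1 * Z1 t w + \<theta>2 * Z2 t w)) =
            complex_of_real (exp (- ((1/2) powr (\<alpha>/2)) *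
              \<bar>\<theta>1^2 * R11 + 2 * \<theta>1 * \<theta>2 * R12 + \<theta>2^2 * R22\<bar> powr (\<alpha>/2)))"
    and "\<And>t w. X1 t w = (\<Sum>j. a1 \<Theta> j * Z1 (t - int j) w + a2 \<Theta> j * Z2 (t - int j) w)"
    and "\<And>t w. X2 t w = (\<Sum>j. a3 \<Theta> j * Z1 (t - int j) w + a4 \<Theta> j * Z2 (t - int j) w)"
  shows "\<forall>(t::int) (h::nat).
     CD M (X1 t) (X2 (t + int h)) = complex_of_real (
         (1/2) powr (\<alpha>/2) * (\<Sum>j. \<bar>Qf R11 R12 R22 (a1 \<Theta> j) (a2 \<Theta> j)\<bar> powr (\<alpha>/2))
       + (1/2) powr (\<alpha>/2) * (\<Sum>j. \<bar>Qf R11 R12 R22 (a3 \<Theta> (j + h)) (a4 \<Theta> (j + h))\<bar> powr (\<alpha>/2))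
       - (1/2) powr (\<alpha>/2) * (\<Sum>j. \<bar>Qf R11 R12 R22 (a1 \<Theta> j - a3 \<Theta> (j + h))
                                         (a2 \<Theta> j - a4 \<Theta> (j + h))\<bar> powr (\<alpha>/2)))
   \<and> CD M (X1 t) (X2 (t - int h)) = complex_of_real (
         (1/2) powr (\<alpha>/2) * (\<Sum>j. \<bar>Qf R11 R12 R22 (a1 \<Theta> (j + h)) (a2 \<Theta> (j + h))\<bar> powr (\<alpha>/2))
       + (1/2) powr (\<alpha>/2) * (\<Sum>j. \<bar>Qf R11 R12 R22 (a3 \<Theta> j) (a4 \<Theta> j)\<bar> powr (\<alpha>/2))
       - (1/2) powr (\<alpha>/2) * (\<Sum>j. \<bar>Qf R11 R12 R22 (a1 \<Theta> (j + h) - a3 \<Theta> j)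
                                         (a2 \<Theta> (j + h) - a4 \<Theta> j)\<bar> powr (\<alpha>/2)))"
proof -
  \<comment> \<open>\<open>\<alpha> < 2\<close> and \<open>R12\<^sup>2 \<le> R11 * R22\<close> only make the assumed characteristic function exist;
     the computation does not need them.\<close>
  interpret subgaussian_noise M \<alpha> R11 R12 R22 Z1 Z2
    using assms unfolding subgaussian_noise_def subgaussian_noise_axioms_def Qf_def by blast
  have "X1 = linear_process (a1 \<Theta>) (a2 \<Theta>)" "X2 = linear_process (a3 \<Theta>) (a4 \<Theta>)"
    using assms(13,14) by (auto simp: linear_process_def fun_eq_iff)
  then show ?thesis
    using CD_linear_process_lead[OF assms(4,5)] CD_linear_process_lag[OF assms(4,5)]
    by (simp add: Q_sum_def)
qed

end
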